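(* There is an absolute constant $c>0$ such that the following holds. Let $n,m\ge1$ be integers, $\alpha,\beta,\gamma\in(0,1/2)$ with $\alpha n\ge2$, let $X\sim\mathcal{D}^n$, let $x\in S^{n-1}$ be $(\alpha,\gamma)$-incompressible, and let $D=\mathrm{LCD}_{\alpha,\beta}(x)$. Then for every $\varepsilon\ge 1/(2\pi mD)$, $$\Pr[|\langle X,x\rangle|\le\varepsilon]\le c\left(\frac{\varepsilon}{\gamma}+\frac{1}{(\alpha\beta m)^{\alpha n}}\right).$$
   Context: For an integer $m\ge1$, $\mathcal{D}$ denotes the uniform distribution on $\{a/m: a\in\{-m,\ldots,m\}\}$, and $\mathcal{D}^n$ the distribution of a random vector in $\mathbb{R}^n$ with independent $\mathcal{D}$-distributed coordinates. For $y\in\mathbb{R}^n$ write $y=[y]+\{y\}$ with $[y]\in\mathbb{Z}^n$ and $\{y\}\in[-1/2,1/2]^n$ (coordinatewise nearest-integer rounding). For $\alpha,\gamma\in(0,1)$, a unit vector $x\in S^{n-1}$ is $(\alpha,\gamma)$-compressible if $x=u+v$ where $u$ has at most $\alpha n$ nonzero coordinates and $\|v\|_2\le\gamma$; otherwise $x$ is $(\alpha,\gamma)$-incompressible. For $x\in S^{n-1}$, $\mathrm{LCD}_{\alpha,\beta}(x)$ is the infimum of all $D>0$ such that $\{Dx\}=u+v$ with $u$ having at most $\alpha n$ nonzero coordinates and $\|v\|_2\le\beta\min(D,\sqrt n)$ (infimum of the empty set being $+\infty$). *)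

theory Defs
  imports "HOL-Probability.Probability"
begin

text \<open>Vectors in R^n are represented as functions nat => real; only coordinates i < n matter.\<close>

definition vnorm :: "nat \<Rightarrow> (nat \<Rightarrow> real) \<Rightarrow> real" where
  "vnorm n v = sqrt (\<Sum>i<n. (v i)^2)"

definition on_sphere :: "nat \<Rightarrow> (nat \<Rightarrow> real) \<Rightarrow> bool" where
  "on_sphere n x \<longleftrightarrow> vnorm n x = 1"

definition supp_card :: "nat \<Rightarrow> (nat \<Rightarrow> real) \<Rightarrow> nat" where
  "supp_card n u = card {i. i < n \<and> u i \<noteq> 0}"

text \<open>Nearest-integer rounding: {y} = y - [y], in [-1/2,1/2].\<close>
definition frac_part :: "real \<Rightarrow> real" where
  "frac_part y = y - of_int (round y)"

definition compressible :: "nat \<Rightarrow> real \<Rightarrow> real \<Rightarrow> (nat \<Rightarrow> real) \<Rightarrow> bool" where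
  "compressible n \<alpha> \<gamma> x \<longleftrightarrow> on_sphere n x \<and>
     (\<exists>u v. (\<forall>i<n. x i = u i + v i) \<and> real (supp_card n u) \<le> \<alpha> * real n \<and> vnorm n v \<le> \<gamma>)"

definition incompressible :: "nat \<Rightarrow> real \<Rightarrow> real \<Rightarrow> (nat \<Rightarrow> real) \<Rightarrow> bool" where
  "incompressible n \<alpha> \<gamma> x \<longleftrightarrow> on_sphere n x \<and> \<not> compressible n \<alpha> \<gamma> x"

text \<open>LCD as an extended real; the infimum of the empty set is +infinity.\<close>
definition LCD :: "nat \<Rightarrow> real \<Rightarrow> real \<Rightarrow> (nat \<Rightarrow> real) \<Rightarrow> ereal" where
  "LCD n \<alpha> \<beta> x = Inf (ereal ` {D. D > 0 \<and>
     (\<exists>u v. (\<forall>i<n. frac_part (D * x i) = u i + v i) \<and> real (supp_card n u) \<le> \<alpha> * real n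
        \<and> vnorm n v \<le> \<beta> * min D (sqrt (real n)))})"

text \<open>The distribution D^n: uniform on {a/m : a in {-m..m}}^n (coordinates i < n; others fixed to 0).\<close>
definition Dn :: "nat \<Rightarrow> nat \<Rightarrow> (nat \<Rightarrow> real) pmf" where
  "Dn m n = pmf_of_set (PiE {..<n} (\<lambda>_. {real_of_int a / real m | a. a \<in> {- int m..int m}}))"

end

(*
  Esseen's inequality, smoothed with the Fejer kernel, bounds the probability by
  4 / N^2 times the sum over j, l < N of |phi((j - l) h)| for a frequency step h,
  where phi is the characteristic function of <X, x>: a product over the coordinates
  of normalised Dirichlet kernels psi(tau x_i).  For tau up to alpha sqrt n / 2, incompressibility
  yields two disjoint groups of coordinates of mass gamma^2 / 3 each with |tau x_i| <= 1/2,
  on which psi^2 <= 1 / (1 + (m tau x_i)^2); so |phi| <= 1 / (1 + k^2) at the k-th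
  frequency.  Between alpha sqrt n / 2 and the LCD, the definition of the LCD forces more
  than alpha n coordinates of tau x to have fractional part at least alpha beta / 2, each
  contributing a factor 4 / (7 alpha beta m) to |phi|.  Summing over the lattice with
  N of order gamma / epsilon gives the bound.
*)
theory Submission
  imports Defs
begin

lemma sin_ge_7_12:
  fixes w :: real
  assumes "0 \<le> w" "w \<le> pi / 2"
  shows "7 * w / 12 \<le> sin w"
proof -
  have "\<bar>sin w - (\<Sum>k<3. sin_coeff k * w ^ k)\<bar> \<le> inverse (fact 3) * \<bar>w\<bar> ^ 3"
    by (rule Maclaurin_sin_bound)
  moreover have "(\<Sum>k<3. sin_coeff k * w ^ k) = w"
    by (simp add: sin_coeff_def eval_nat_numeral)
  moreover have "inverse (fact 3) * \<bar>w\<bar> ^ 3 = w ^ 3 / 6"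
    using assms by (simp add: eval_nat_numeral)
  ultimately have taylor: "\<bar>sin w - w\<bar> \<le> w ^ 3 / 6"
    by simp
  have "pi \<le> 79 / 25"
    using pi_approx by simp
  then have "w \<le> 79 / 50"
    using assms by linarith
  then have "w * w \<le> 5 / 2"
    using assms mult_mono[of w "79/50" w "79/50"] by linarith
  then have "w ^ 3 / 6 \<le> 5 * w / 12"
    using assms mult_left_mono[of "w * w" "5/2" w] by (simp add: power3_eq_cube)
  with taylor show ?thesis
    by linarith
qed

lemma cos_le_1_minus_quadratic:
  fixes z :: real
  assumes "\<bar>z\<bar> \<le> pi"
  shows "cos z \<le> 1 - 49 / 288 * z\<^sup>2"
proof -
  have "7 * (\<bar>z\<bar> / 2) / 12 \<le> sin (\<bar>z\<bar> / 2)"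
    using assms by (intro sin_ge_7_12) auto
  then have "(7 * (\<bar>z\<bar> / 2) / 12)\<^sup>2 \<le> sin (\<bar>z\<bar> / 2) ^ 2"
    by (intro power_mono) auto
  moreover have "cos z = 1 - 2 * sin (\<bar>z\<bar> / 2) ^ 2"
    using cos_double_sin[of "\<bar>z\<bar> / 2"] by simp
  ultimately show ?thesis
    by (simp add: power2_eq_square)
qed

lemma cos_ge_half:
  fixes z :: real
  assumes "\<bar>z\<bar> \<le> 1"
  shows "1 / 2 \<le> cos z"
proof -
  have "cos (pi / 3) \<le> cos \<bar>z\<bar>"
    using assms pi_approx by (subst cos_mono_le_eq) auto
  then show ?thesis
    by (simp add: cos_60)
qed

lemma sq_one_minus_twice_le:
  fixes y :: real
  assumes "0 \<le> y" "y \<le> 1 / 4"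
  shows "(1 - 2 * y)\<^sup>2 \<le> 1 / (1 + y)"
proof -
  have "y * y * y \<le> (1 / 16) * y"
    using assms mult_mono[of y "1/4" y "1/4"] mult_right_mono[of "y * y" "1/16" y] by auto
  then have "(1 - 2 * y)\<^sup>2 * (1 + y) \<le> 1"
    using assms by (simp add: power2_eq_square algebra_simps)
  then show ?thesis
    using assms by (simp add: field_simps)
qed

lemma sq_two_sevenths_div_le:
  fixes z :: real
  assumes "1 / 2 \<le> z"
  shows "(2 / (7 * z))\<^sup>2 \<le> 1 / (1 + z\<^sup>2)"
proof -
  have "1 / 4 \<le> z\<^sup>2"
    using assms power_mono[of "1/2" z 2] by (simp add: power2_eq_square)
  then show ?thesis
    using assms by (simp add: field_simps power2_eq_square)
qed

lemma min_one_power_le_inverse_powr: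
  fixes c q a :: real
  assumes "0 < c" "c * q \<le> 1" "0 < q" "0 \<le> a" "a \<le> real k"
  shows "min 1 (c ^ k) \<le> 1 / q powr a"
proof (cases "q \<le> 1")
  case True
  then have "q powr a \<le> 1"
    using assms by (intro powr_le1) auto
  then have "1 \<le> 1 / q powr a"
    using assms by simp
  then show ?thesis
    by linarith
next
  case False
  have "c \<le> 1 / q"
    using assms by (simp add: field_simps)
  moreover have "1 / q \<le> 1"
    using False by simp
  ultimately have c_le: "c \<le> 1 / q" "c \<le> 1"
    by linarith+
  have "c ^ k = c powr real k"
    using assms by (simp add: powr_realpow)
  also have "\<dots> \<le> c powr a"
    using assms c_le by (intro powr_mono') auto
  also have "\<dots> \<le> (1 / q) powr a"
    using assms c_le by (intro powr_mono2) auto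
  also have "\<dots> = 1 / q powr a"
    using assms by (simp add: powr_divide)
  finally show ?thesis
    by linarith
qed

lemma exists_nat_scale:
  fixes t :: real
  assumes "0 < t"
  obtains N :: nat where "N \<ge> 1" "(real N - 1) * t \<le> 1 / 2" "1 / real N < 2 * t"
proof
  define N where "N = nat \<lfloor>1 / (2 * t)\<rfloor> + 1"
  have N: "real N - 1 = of_int \<lfloor>1 / (2 * t)\<rfloor>"
    unfolding N_def using assms by simp
  show "N \<ge> 1"
    unfolding N_def by simp
  have "(real N - 1) * t \<le> 1 / (2 * t) * t"
    unfolding N using assms by (intro mult_right_mono) auto
  then show "(real N - 1) * t \<le> 1 / 2"
    using assms by simp
  have "1 / (2 * t) < real N"
    using N by linarith
  then show "1 / real N < 2 * t"
    using assms \<open>N \<ge> 1\<close> by (simp add: field_simps)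
qed

lemma le_of_forall_le_add_div_nat:
  fixes p q c :: real
  assumes "\<And>N :: nat. N \<ge> 1 \<Longrightarrow> p \<le> c / real N + q"
  shows "p \<le> q"
proof (rule LIMSEQ_le_const)
  show "(\<lambda>N. c / real N + q) \<longlonglongrightarrow> q"
    using tendsto_add[OF lim_const_over_n[of c] tendsto_const[of q]] by simp
  show "\<exists>N0. \<forall>N\<ge>N0. p \<le> c / real N + q"
    using assms by (intro exI[of _ 1]) simp
qed

lemma le_of_forall_scale_le:
  fixes p q c t :: real
  assumes "0 \<le> c" "0 \<le> t"
    and "\<And>N :: nat. N \<ge> 1 \<Longrightarrow> (real N - 1) * t \<le> 1 / 2 \<Longrightarrow> p \<le> c / real N + q"
  shows "p \<le> 2 * c * t + q"
proof (cases "t = 0")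
  case True
  have "p \<le> c / real N + q" if "N \<ge> 1" for N
    using assms(3)[OF that] True by simp
  then have "p \<le> q"
    by (rule le_of_forall_le_add_div_nat)
  with True show ?thesis
    by simp
next
  case False
  with assms(2) have "0 < t"
    by simp
  then obtain N where N: "N \<ge> 1" "(real N - 1) * t \<le> 1 / 2" "1 / real N < 2 * t"
    by (rule exists_nat_scale)
  have "c / real N = c * (1 / real N)"
    by simp
  also have "\<dots> \<le> c * (2 * t)"
    using N(3) assms(1) by (intro mult_left_mono) auto
  finally show ?thesis
    using assms(3)[OF N(1,2)] by simp
qed

lemma ereal_less_of_inverse_mult_le:
  assumes "0 < a" "0 \<le> L" "1 / (ereal a * L) \<le> ereal \<epsilon>" "0 < \<tau>" "a * \<tau> * \<epsilon> < 1"
  shows "ereal \<tau> < L"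
proof (cases L)
  case (real r)
  show ?thesis
  proof (cases "r = 0")
    case True
    with assms(3) real show ?thesis
      by (simp add: divide_ereal_def)
  next
    case False
    with assms(2) real have "0 < r"
      by simp
    have "1 / (ereal a * L) = ereal (1 / (a * r))"
      using real \<open>0 < r\<close> assms(1) by (simp add: divide_ereal_def field_simps)
    with assms(3) have "1 / (a * r) \<le> \<epsilon>"
      by simp
    moreover have "0 < 1 / (a * r)"
      using \<open>0 < r\<close> assms(1) by simp
    ultimately have "0 < \<epsilon>"
      by linarith
    have "1 \<le> a * \<epsilon> * r"
      using \<open>1 / (a * r) \<le> \<epsilon>\<close> \<open>0 < r\<close> assms(1) by (simp add: field_simps)
    have "a * \<epsilon> * \<tau> < 1"
      using assms(5) by (simp add: mult_ac)
    with \<open>1 \<le> a * \<epsilon> * r\<close> have "a * \<epsilon> * \<tau> < a * \<epsilon> * r"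
      by linarith
    then have "\<tau> < r"
      using \<open>0 < \<epsilon>\<close> assms(1) by simp
    with real show ?thesis
      by simp
  qed
qed (use assms in auto)

lemma nonneg_of_inverse_mult_le:
  assumes "0 < a" "0 \<le> L" "1 / (ereal a * L) \<le> ereal \<epsilon>"
  shows "0 \<le> \<epsilon>"
proof -
  have "0 \<le> 1 / (ereal a * L)"
    unfolding divide_ereal_def using assms by (simp add: inverse_ereal_ge0I)
  then have "0 \<le> ereal \<epsilon>"
    using assms(3) by (rule order_trans)
  then show ?thesis
    by simp
qed

lemma prod_le_prod_subset:
  fixes f :: "'a \<Rightarrow> 'b::linordered_semidom"
  assumes "finite I" "S \<subseteq> I" "\<And>i. i \<in> I \<Longrightarrow> 0 \<le> f i \<and> f i \<le> 1"
  shows "prod f I \<le> prod f S"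
proof -
  have "prod f I = prod f S * prod f (I - S)"
    using assms by (metis prod.subset_diff mult.commute)
  also have "\<dots> \<le> prod f S * 1"
    using assms by (intro mult_left_mono prod_le_1 prod_nonneg) auto
  finally show ?thesis
    by simp
qed

lemma one_plus_sum_le_prod:
  fixes a :: "'a \<Rightarrow> real"
  assumes "finite A" "\<And>i. i \<in> A \<Longrightarrow> 0 \<le> a i"
  shows "1 + sum a A \<le> (\<Prod>i\<in>A. 1 + a i)"
  using assms
proof (induction A rule: finite_induct)
  case empty
  then show ?case by simp
next
  case (insert j A)
  have "0 \<le> a j * sum a A"
    using insert by (simp add: sum_nonneg)
  then have "1 + sum a (insert j A) \<le> (1 + a j) * (1 + sum a A)"
    using insert by (simp add: algebra_simps)
  also have "\<dots> \<le> (1 + a j) * (\<Prod>i\<in>A. 1 + a i)"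
    using insert by (intro mult_left_mono) auto
  finally show ?case
    using insert by simp
qed

lemma exists_subset_sum_between:
  fixes w :: "'a \<Rightarrow> real"
  assumes "finite A" "\<And>i. i \<in> A \<Longrightarrow> 0 \<le> w i \<and> w i \<le> b" "0 < b" "b \<le> sum w A"
  shows "\<exists>B\<subseteq>A. b \<le> sum w B \<and> sum w B < 2 * b"
  using assms
proof (induction A rule: finite_induct)
  case empty
  then show ?case by simp
next
  case (insert j A)
  show ?case
  proof (cases "b \<le> sum w A")
    case True
    then obtain B where "B \<subseteq> A" "b \<le> sum w B \<and> sum w B < 2 * b"
      using insert by auto
    then show ?thesis
      by blast
  next
    case False
    have "w j \<le> b" "sum w (insert j A) = w j + sum w A"
      using insert by simp_all
    with False have "sum w (insert j A) < 2 * b"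
      by linarith
    with insert show ?thesis
      by blast
  qed
qed

text \<open>Either one coordinate already carries mass \<open>b\<close>, or the light coordinates can be cut into
  a part of mass in \<open>[b, 2 b)\<close> and a remainder of mass more than \<open>b\<close>.\<close>
lemma exists_two_disjoint_heavy_subsets:
  fixes w :: "'a \<Rightarrow> real"
  assumes "finite A" "\<And>i. i \<in> A \<Longrightarrow> 0 \<le> w i" "0 < b" "3 * b < sum w A"
    and "\<And>j. j \<in> A \<Longrightarrow> b \<le> w j \<Longrightarrow> b \<le> sum w (A - {j})"
  obtains B1 B2 where "B1 \<subseteq> A" "B2 \<subseteq> A" "B1 \<inter> B2 = {}" "b \<le> sum w B1" "b \<le> sum w B2"
proof (cases "\<exists>j\<in>A. b \<le> w j")
  case True
  then obtain j where j: "j \<in> A" "b \<le> w j"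
    by blast
  then have "{j} \<subseteq> A" "A - {j} \<subseteq> A" "{j} \<inter> (A - {j}) = {}" "b \<le> sum w {j}"
    by auto
  moreover have "b \<le> sum w (A - {j})"
    using assms(5) j .
  ultimately show ?thesis
    by (rule that)
next
  case False
  have light: "0 \<le> w i \<and> w i \<le> b" if "i \<in> A" for i
    using False assms(2)[OF that] that by (meson linorder_not_le less_imp_le)
  have "0 \<le> sum w A"
    using assms(2) by (rule sum_nonneg)
  then have "b \<le> sum w A"
    using assms(4) by linarith
  with assms(1,3) light have "\<exists>B\<subseteq>A. b \<le> sum w B \<and> sum w B < 2 * b"
    by (intro exists_subset_sum_between)
  then obtain B where B: "B \<subseteq> A" "b \<le> sum w B" "sum w B < 2 * b"
    by blast
  have "sum w (A - B) = sum w A - sum w B"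
    using B assms(1) by (simp add: sum_diff)
  then have "b \<le> sum w (A - B)"
    using B assms(4) by linarith
  moreover have "A - B \<subseteq> A" "B \<inter> (A - B) = {}"
    by auto
  ultimately show ?thesis
    using B by (intro that[of B "A - B"])
qed

lemma card_large_terms_le:
  fixes y :: "'a \<Rightarrow> real"
  assumes "finite I"
  shows "real (card {i\<in>I. 1 / 2 < \<bar>y i\<bar>}) \<le> 4 * (\<Sum>i\<in>I. (y i)\<^sup>2)"
proof -
  have "real (card {i\<in>I. 1 / 2 < \<bar>y i\<bar>}) = 4 * (\<Sum>i\<in>{i\<in>I. 1 / 2 < \<bar>y i\<bar>}. 1 / 4)"
    by simp
  also have "\<dots> \<le> 4 * (\<Sum>i\<in>{i\<in>I. 1 / 2 < \<bar>y i\<bar>}. (y i)\<^sup>2)"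
  proof (intro mult_left_mono sum_mono)
    fix i assume "i \<in> {i\<in>I. 1 / 2 < \<bar>y i\<bar>}"
    then have "(1 / 2)\<^sup>2 \<le> \<bar>y i\<bar>\<^sup>2"
      by (intro power_mono) auto
    then show "1 / 4 \<le> (y i)\<^sup>2"
      by (simp add: power2_eq_square)
  qed simp
  also have "\<dots> \<le> 4 * (\<Sum>i\<in>I. (y i)\<^sup>2)"
    using assms by (intro mult_left_mono sum_mono2) auto
  finally show ?thesis .
qed

lemma symmetric_interval_Suc:
  "{- int (Suc m)..int (Suc m)} = insert (int m + 1) (insert (- (int m + 1)) {- int m..int m})"
  by auto

lemma sum_cos_symmetric_mult_sin:
  fixes y :: real
  shows "(\<Sum>b\<in>{- int m..int m}. cos (2 * y * of_int b)) * sin y = sin ((2 * real m + 1) * y)"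
proof (induction m)
  case 0
  then show ?case by simp
next
  case (Suc m)
  have "(\<Sum>b\<in>{- int (Suc m)..int (Suc m)}. cos (2 * y * of_int b))
      = 2 * cos (2 * y * (real m + 1)) + (\<Sum>b\<in>{- int m..int m}. cos (2 * y * of_int b))"
    unfolding symmetric_interval_Suc using cos_minus[of "2 * y * (real m + 1)"] by (simp add: algebra_simps)
  moreover have "2 * cos (2 * y * (real m + 1)) * sin y
      = sin (2 * y * (real m + 1) + y) - sin (2 * y * (real m + 1) - y)"
    by (simp add: sin_add sin_diff)
  ultimately show ?case
    using Suc by (simp add: algebra_simps)
qed

lemma sum_sin_symmetric:
  fixes c :: real
  shows "(\<Sum>b\<in>{- int m..int m}. sin (c * of_int b)) = 0"
proof -
  have "(\<Sum>b\<in>{- int m..int m}. sin (c * of_int b)) = (\<Sum>b\<in>{- int m..int m}. sin (c * of_int (- b)))"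
    by (rule sum.reindex_bij_witness[of _ uminus uminus]) auto
  then show ?thesis
    by (simp add: sum_negf)
qed

lemma sum_squares_symmetric:
  "(\<Sum>b\<in>{- int m..int m}. (real_of_int b)\<^sup>2) = real m * (real m + 1) * (2 * real m + 1) / 3"
proof (induction m)
  case 0
  then show ?case by simp
next
  case (Suc m)
  then show ?case
    unfolding symmetric_interval_Suc by (simp add: power2_eq_square algebra_simps)
qed

lemma sum_inverse_one_plus_sq_le:
  "(\<Sum>k\<in>{- int M..int M}. 1 / (1 + (real_of_int k)\<^sup>2)) \<le> 5 - 4 / (real M + 1)"
proof (induction M)
  case 0
  then show ?case by simp
next
  case (Suc M)
  let ?a = "real M + 1"
  have "2 * (?a * (?a + 1)) \<le> 4 * (1 + ?a\<^sup>2)"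
    by (simp add: power2_eq_square algebra_simps)
  then have "2 / (1 + ?a\<^sup>2) \<le> 4 / ?a - 4 / (?a + 1)"
    by (simp add: divide_simps add_pos_nonneg)
  with Suc show ?case
    unfolding symmetric_interval_Suc by (simp add: power2_eq_square algebra_simps)
qed

lemma sum_inverse_one_plus_sq_diff_le:
  assumes "j < N"
  shows "(\<Sum>l<N. 1 / (1 + (real j - real l)\<^sup>2)) \<le> 5"
proof -
  let ?g = "\<lambda>k::int. 1 / (1 + (real_of_int k)\<^sup>2)"
  have "(\<Sum>l<N. 1 / (1 + (real j - real l)\<^sup>2)) = (\<Sum>k\<in>(\<lambda>l. int j - int l) ` {..<N}. ?g k)"
    by (subst sum.reindex) (auto simp: inj_on_def)
  also have "\<dots> \<le> (\<Sum>k\<in>{- int N..int N}. ?g k)"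
    using assms by (intro sum_mono2) (auto simp: add_pos_nonneg)
  also have "\<dots> \<le> 5 - 4 / (real N + 1)"
    by (rule sum_inverse_one_plus_sq_le)
  also have "\<dots> \<le> 5"
    by simp
  finally show ?thesis .
qed

lemma double_sum_le:
  assumes "\<And>j l. j < N \<Longrightarrow> l < N \<Longrightarrow> G j l \<le> 1 / (1 + (real j - real l)\<^sup>2) + Q"
  shows "(\<Sum>j<N. \<Sum>l<N. G j l) \<le> 5 * real N + real N ^ 2 * Q"
proof -
  have "(\<Sum>j<N. \<Sum>l<N. G j l) \<le> (\<Sum>j<N. \<Sum>l<N. 1 / (1 + (real j - real l)\<^sup>2) + Q)"
    using assms by (intro sum_mono) auto
  also have "\<dots> = (\<Sum>j<N. (\<Sum>l<N. 1 / (1 + (real j - real l)\<^sup>2)) + real N * Q)"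
    by (simp add: sum.distrib)
  also have "\<dots> \<le> (\<Sum>j<N. 5 + real N * Q)"
    using sum_inverse_one_plus_sq_diff_le by (intro sum_mono) auto
  finally show ?thesis
    by (simp add: power2_eq_square algebra_simps)
qed

section \<open>The characteristic function of the distribution\<close>

lemma abs_frac_part_le: "\<bar>frac_part y\<bar> \<le> 1 / 2"
  by (metis frac_part_def of_int_round_abs_le abs_minus_commute)

text \<open>The characteristic function of \<open>\<D>\<close> at \<open>2 \<pi> m \<theta>\<close>.\<close>
definition char_unif :: "nat \<Rightarrow> real \<Rightarrow> real" where
  "char_unif m \<theta> = (\<Sum>b\<in>{- int m..int m}. cos (2 * pi * \<theta> * of_int b)) / (2 * real m + 1)"

lemma abs_char_unif_le_1: "\<bar>char_unif m \<theta>\<bar> \<le> 1"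
proof -
  have "\<bar>\<Sum>b\<in>{- int m..int m}. cos (2 * pi * \<theta> * of_int b)\<bar> \<le> (\<Sum>b\<in>{- int m..int m}. 1)"
    by (rule order_trans[OF sum_abs sum_mono]) auto
  then show ?thesis
    unfolding char_unif_def by (simp add: abs_div)
qed

lemma char_unif_add_int: "char_unif m (\<theta> + of_int k) = char_unif m \<theta>"
proof -
  have "cos (2 * pi * (\<theta> + of_int k) * of_int b) = cos (2 * pi * \<theta> * of_int b)" for b
  proof -
    have "2 * pi * (\<theta> + of_int k) * of_int b = 2 * pi * \<theta> * of_int b + 2 * pi * of_int (k * b)"
      by (simp add: algebra_simps)
    then show ?thesis
      by (simp only: cos_add cos_int_2pin sin_int_2pin mult_1_right mult_zero_right diff_zero)
  qed
  then show ?thesis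
    unfolding char_unif_def by simp
qed

lemma char_unif_minus: "char_unif m (- \<theta>) = char_unif m \<theta>"
proof -
  have "cos (2 * pi * (- \<theta>) * of_int b) = cos (2 * pi * \<theta> * of_int b)" for b
    using cos_minus[of "2 * pi * \<theta> * of_int b"] by simp
  then show ?thesis
    unfolding char_unif_def by simp
qed

lemma char_unif_abs_frac_part: "char_unif m \<theta> = char_unif m \<bar>frac_part \<theta>\<bar>"
proof -
  have "char_unif m \<theta> = char_unif m (frac_part \<theta> + of_int (round \<theta>))"
    unfolding frac_part_def by simp
  then show ?thesis
    by (cases "frac_part \<theta> \<ge> 0") (auto simp: char_unif_add_int char_unif_minus)
qed

lemma char_unif_mult_sin:
  "(2 * real m + 1) * char_unif m d * sin (pi * d) = sin ((2 * real m + 1) * (pi * d))"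
  using sum_cos_symmetric_mult_sin[of "pi * d" m] unfolding char_unif_def by (simp add: mult.assoc)

lemma abs_char_unif_le_inverse:
  assumes "m \<ge> 1" "0 < d" "d \<le> 1 / 2"
  shows "\<bar>char_unif m d\<bar> \<le> 2 / (7 * real m * d)"
proof -
  have "7 * d / 4 \<le> 7 * (pi * d) / 12"
    using pi_approx assms by (simp add: field_simps)
  also have "\<dots> \<le> sin (pi * d)"
    using assms by (intro sin_ge_7_12) auto
  finally have sin_ge: "7 * d / 4 \<le> sin (pi * d)" .
  then have sin_pos: "0 < sin (pi * d)"
    using assms by linarith
  have "(2 * real m + 1) * \<bar>char_unif m d\<bar> * sin (pi * d) = \<bar>(2 * real m + 1) * char_unif m d * sin (pi * d)\<bar>"
    using sin_pos by (simp add: abs_mult)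
  also have "\<dots> = \<bar>sin ((2 * real m + 1) * (pi * d))\<bar>"
    by (simp only: char_unif_mult_sin)
  also have "\<dots> \<le> 1"
    by simp
  finally have "(2 * real m + 1) * \<bar>char_unif m d\<bar> \<le> 1 / sin (pi * d)"
    using sin_pos by (simp add: field_simps)
  also have "\<dots> \<le> 4 / (7 * d)"
    using sin_ge assms by (simp add: field_simps)
  finally have "(2 * real m + 1) * \<bar>char_unif m d\<bar> \<le> 4 / (7 * d)" .
  moreover have "2 * real m * \<bar>char_unif m d\<bar> \<le> (2 * real m + 1) * \<bar>char_unif m d\<bar>"
    by (intro mult_right_mono) auto
  ultimately have "real m * \<bar>char_unif m d\<bar> \<le> 2 / (7 * d)"
    by simp
  then show ?thesis
    using assms by (simp add: field_simps)
qed

lemma abs_char_unif_le_of_frac_part: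
  assumes "m \<ge> 1" "0 < s" "s \<le> \<bar>frac_part \<theta>\<bar>"
  shows "\<bar>char_unif m \<theta>\<bar> \<le> 2 / (7 * real m * s)"
proof -
  have "\<bar>char_unif m \<theta>\<bar> \<le> 2 / (7 * real m * \<bar>frac_part \<theta>\<bar>)"
    using assms abs_frac_part_le by (subst char_unif_abs_frac_part) (intro abs_char_unif_le_inverse, auto)
  also have "\<dots> \<le> 2 / (7 * real m * s)"
    using assms by (intro divide_left_mono mult_left_mono) auto
  finally show ?thesis .
qed

lemma char_unif_le_quadratic:
  assumes "m \<ge> 1" "0 \<le> d" "real m * d \<le> 1 / 2"
  shows "char_unif m d \<le> 1 - 2 * (real m * d)\<^sup>2"
proof -
  have cos_le: "cos (2 * pi * d * of_int b) \<le> 1 - 49 / 288 * (2 * pi * d * of_int b)\<^sup>2"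
    if "b \<in> {- int m..int m}" for b
  proof (rule cos_le_1_minus_quadratic)
    have "\<bar>of_int b\<bar> \<le> real m"
      using that by auto
    then have "\<bar>2 * pi * d * of_int b\<bar> \<le> 2 * pi * d * real m"
      using assms by (simp add: abs_mult mult_left_mono)
    also have "\<dots> \<le> pi"
      using assms by (simp add: field_simps)
    finally show "\<bar>2 * pi * d * of_int b\<bar> \<le> pi" .
  qed
  have "(2 * real m + 1) * char_unif m d = (\<Sum>b\<in>{- int m..int m}. cos (2 * pi * d * of_int b))"
    unfolding char_unif_def by simp
  also have "\<dots> \<le> (\<Sum>b\<in>{- int m..int m}. 1 - 49 / 288 * (2 * pi * d * of_int b)\<^sup>2)"
    using cos_le by (intro sum_mono) auto
  also have "\<dots> = (2 * real m + 1) - 49 / 72 * pi\<^sup>2 * d\<^sup>2 * (\<Sum>b\<in>{- int m..int m}. (of_int b)\<^sup>2)"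
    by (simp add: sum_subtractf sum_distrib_left power_mult_distrib algebra_simps)
  also have "\<dots> = (2 * real m + 1) * (1 - 49 / 216 * pi\<^sup>2 * d\<^sup>2 * (real m * (real m + 1)))"
    by (simp add: sum_squares_symmetric algebra_simps)
  also have "\<dots> \<le> (2 * real m + 1) * (1 - 2 * (real m * d)\<^sup>2)"
  proof (rule mult_left_mono)
    have "9 \<le> pi\<^sup>2"
      using pi_approx power_mono[of 3 pi 2] by simp
    then have "2 * (d\<^sup>2 * (real m * real m)) \<le> 49 / 216 * pi\<^sup>2 * (d\<^sup>2 * (real m * (real m + 1)))"
      by (intro mult_mono) (auto simp: mult_left_mono)
    then show "1 - 49 / 216 * pi\<^sup>2 * d\<^sup>2 * (real m * (real m + 1)) \<le> 1 - 2 * (real m * d)\<^sup>2"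
      by (simp add: power2_eq_square algebra_simps)
  qed simp
  finally show ?thesis
    by (simp add: add_pos_nonneg)
qed

lemma char_unif_ge_neg_third:
  assumes "m \<ge> 1" "0 < d" "real m * d \<le> 1 / 2"
  shows "- 1 / 3 \<le> char_unif m d"
proof -
  let ?u = "pi * d"
  have "1 * d \<le> real m * d"
    using assms by (intro mult_right_mono) auto
  then have "d \<le> 1 / 2"
    using assms by linarith
  then have u: "0 < ?u" "?u \<le> pi / 2"
    using assms by auto
  then have sin_pos: "0 < sin ?u"
    by (intro sin_gt_zero) auto
  have mu: "2 * real m * ?u \<le> pi"
    using assms by (simp add: field_simps)
  have "- sin ?u \<le> sin ((2 * real m + 1) * ?u)"
  proof (cases "(2 * real m + 1) * ?u \<le> pi")
    case True
    then show ?thesis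
      using sin_ge_zero[of "(2 * real m + 1) * ?u"] sin_pos u by simp
  next
    case False
    define w where "w = (2 * real m + 1) * ?u - pi"
    have "0 \<le> w" "w \<le> ?u"
      using False mu unfolding w_def by (auto simp: algebra_simps)
    then have "sin w \<le> sin ?u"
      using u pi_gt_zero by (intro sin_monotone_2pi_le; linarith)
    moreover have "sin ((2 * real m + 1) * ?u) = - sin w"
      unfolding w_def by (simp add: sin_diff)
    ultimately show ?thesis
      by simp
  qed
  then have "- 1 \<le> (2 * real m + 1) * char_unif m d"
    using char_unif_mult_sin[of m d] sin_pos
    by (metis minus_mult_left mult_cancel_right1 mult_le_cancel_right_pos)
  then have "- 1 / (2 * real m + 1) \<le> char_unif m d"
    by (simp add: field_simps)
  moreover have "- 1 / 3 \<le> - 1 / (2 * real m + 1)"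
    using assms by (simp add: field_simps)
  ultimately show ?thesis
    by linarith
qed

lemma char_unif_sq_le:
  assumes "m \<ge> 1" "\<bar>y\<bar> \<le> 1 / 2"
  shows "(char_unif m y)\<^sup>2 \<le> 1 / (1 + (real m * y)\<^sup>2)"
proof -
  define d where "d = \<bar>y\<bar>"
  have "char_unif m y = char_unif m d" "(real m * y)\<^sup>2 = (real m * d)\<^sup>2"
    unfolding d_def by (cases "0 \<le> y"; simp add: char_unif_minus power_mult_distrib)+
  moreover have "(char_unif m d)\<^sup>2 \<le> 1 / (1 + (real m * d)\<^sup>2)"
  proof (cases "real m * d \<le> 1 / 2")
    case True
    have "(real m * d)\<^sup>2 \<le> (1 / 2)\<^sup>2"
      using True by (intro power_mono) (auto simp: d_def)
    then have "(real m * d)\<^sup>2 \<le> 1 / 4"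
      by (simp add: power2_eq_square)
    moreover have "- 1 / 3 \<le> char_unif m d"
      using char_unif_ge_neg_third[OF assms(1) _ True] unfolding d_def
      by (cases "y = 0") (auto simp: char_unif_def)
    moreover have "char_unif m d \<le> 1 - 2 * (real m * d)\<^sup>2"
      using char_unif_le_quadratic[OF assms(1) _ True] unfolding d_def by simp
    ultimately have "(char_unif m d)\<^sup>2 \<le> (1 - 2 * (real m * d)\<^sup>2)\<^sup>2"
      by (intro power2_le_iff_abs_le[THEN iffD2]) auto
    also have "\<dots> \<le> 1 / (1 + (real m * d)\<^sup>2)"
      using \<open>(real m * d)\<^sup>2 \<le> 1 / 4\<close> by (intro sq_one_minus_twice_le) auto
    finally show ?thesis .
  next
    case False
    then have "0 < d"
      unfolding d_def by (cases "y = 0") auto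
    then have "\<bar>char_unif m d\<bar> \<le> 2 / (7 * (real m * d))"
      using abs_char_unif_le_inverse[OF assms(1)] assms unfolding d_def by (simp add: mult.assoc)
    then have "(char_unif m d)\<^sup>2 \<le> (2 / (7 * (real m * d)))\<^sup>2"
      by (metis abs_ge_zero power2_abs power_mono)
    also have "\<dots> \<le> 1 / (1 + (real m * d)\<^sup>2)"
      using False by (intro sq_two_sevenths_div_le) auto
    finally show ?thesis .
  qed
  ultimately show ?thesis
    by simp
qed

definition grid :: "nat \<Rightarrow> real set" where
  "grid m = {real_of_int a / real m | a. a \<in> {- int m..int m}}"

lemma grid_eq_image: "grid m = (\<lambda>b. real_of_int b / real m) ` {- int m..int m}"
  unfolding grid_def by auto

lemma inj_on_grid: "m \<ge> 1 \<Longrightarrow> inj_on (\<lambda>b. real_of_int b / real m) {- int m..int m}"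
  by (auto simp: inj_on_def)

lemma sum_grid: "m \<ge> 1 \<Longrightarrow> (\<Sum>a\<in>grid m. f a) = (\<Sum>b\<in>{- int m..int m}. f (real_of_int b / real m))"
  unfolding grid_eq_image by (simp add: sum.reindex inj_on_grid)

lemma finite_grid: "finite (grid m)"
  unfolding grid_eq_image by simp

lemma card_grid: "m \<ge> 1 \<Longrightarrow> card (grid m) = 2 * m + 1"
  unfolding grid_eq_image by (subst card_image) (auto simp: inj_on_grid)

lemma card_grid_PiE: "m \<ge> 1 \<Longrightarrow> card (PiE {..<n} (\<lambda>_. grid m)) = (2 * m + 1) ^ n"
  by (simp add: card_PiE card_grid)

lemma prob_Dn:
  "measure_pmf.prob (Dn m n) E
    = real (card (PiE {..<n} (\<lambda>_. grid m) \<inter> E)) / real (card (PiE {..<n} (\<lambda>_. grid m)))"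
proof -
  have "0 \<in> grid m"
    unfolding grid_def by force
  then have "PiE {..<n} (\<lambda>_. grid m) \<noteq> {}"
    by (auto simp: PiE_eq_empty_iff)
  moreover have "finite (PiE {..<n} (\<lambda>_. grid m))"
    by (simp add: finite_PiE finite_grid)
  ultimately show ?thesis
    unfolding Dn_def grid_def[symmetric] by (simp add: measure_pmf_of_set)
qed

lemma cis_sum: "finite I \<Longrightarrow> cis (\<Sum>i\<in>I. f i) = (\<Prod>i\<in>I. cis (f i))"
  by (induction I rule: finite_induct) (simp_all add: cis_mult[symmetric])

lemma sum_cis_symmetric:
  fixes c :: real
  shows "(\<Sum>b\<in>{- int m..int m}. cis (c * of_int b)) = complex_of_real (\<Sum>b\<in>{- int m..int m}. cos (c * of_int b))"
  by (rule complex_eqI) (simp_all add: sum_sin_symmetric)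

lemma sum_cos_inner_eq:
  assumes "m \<ge> 1"
  shows "(\<Sum>X\<in>PiE {..<n} (\<lambda>_. grid m). cos (2 * pi * real m * \<sigma> * (\<Sum>i<n. X i * x i)))
    = (2 * real m + 1) ^ n * (\<Prod>i<n. char_unif m (\<sigma> * x i))"
proof -
  let ?t = "2 * pi * real m * \<sigma>"
  have "(\<Sum>X\<in>PiE {..<n} (\<lambda>_. grid m). cis (?t * (\<Sum>i<n. X i * x i)))
      = (\<Sum>X\<in>PiE {..<n} (\<lambda>_. grid m). \<Prod>i<n. cis (?t * x i * X i))"
    by (intro sum.cong refl) (simp add: sum_distrib_left cis_sum mult.commute mult.left_commute)
  also have "\<dots> = (\<Prod>i<n. \<Sum>a\<in>grid m. cis (?t * x i * a))"
    by (rule prod_sum_PiE[symmetric]) (auto simp: finite_grid)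
  also have "\<dots> = (\<Prod>i<n. complex_of_real ((2 * real m + 1) * char_unif m (\<sigma> * x i)))"
  proof (intro prod.cong refl)
    fix i
    have "(\<Sum>a\<in>grid m. cis (?t * x i * a)) = (\<Sum>b\<in>{- int m..int m}. cis (?t * x i * (of_int b / real m)))"
      using assms by (rule sum_grid)
    also have "\<dots> = (\<Sum>b\<in>{- int m..int m}. cis (2 * pi * (\<sigma> * x i) * of_int b))"
      using assms by (intro sum.cong refl arg_cong[where f = cis]) simp
    also have "\<dots> = complex_of_real ((2 * real m + 1) * char_unif m (\<sigma> * x i))"
      unfolding sum_cis_symmetric char_unif_def by simp
    finally show "(\<Sum>a\<in>grid m. cis (?t * x i * a)) = complex_of_real ((2 * real m + 1) * char_unif m (\<sigma> * x i))" .
  qed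
  also have "\<dots> = complex_of_real ((2 * real m + 1) ^ n * (\<Prod>i<n. char_unif m (\<sigma> * x i)))"
    by (simp add: prod.distrib)
  finally have "Re (\<Sum>X\<in>PiE {..<n} (\<lambda>_. grid m). cis (?t * (\<Sum>i<n. X i * x i)))
      = (2 * real m + 1) ^ n * (\<Prod>i<n. char_unif m (\<sigma> * x i))"
    by (simp only: Re_complex_of_real)
  then show ?thesis
    by (simp add: Re_sum)
qed

text \<open>The modulus of the characteristic function of \<open>\<langle>X, x\<rangle>\<close>, \<open>X \<sim> \<D>\<^sup>n\<close>, at \<open>2 \<pi> m \<tau>\<close>.\<close>
definition char_abs_prod :: "nat \<Rightarrow> nat \<Rightarrow> (nat \<Rightarrow> real) \<Rightarrow> real \<Rightarrow> real" where
  "char_abs_prod m n x \<tau> = (\<Prod>i<n. \<bar>char_unif m (\<tau> * x i)\<bar>)"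

lemma char_abs_prod_le_1: "char_abs_prod m n x \<tau> \<le> 1"
  unfolding char_abs_prod_def by (intro prod_le_1) (auto simp: abs_char_unif_le_1)

lemma char_abs_prod_minus: "char_abs_prod m n x (- \<tau>) = char_abs_prod m n x \<tau>"
  unfolding char_abs_prod_def by (metis char_unif_minus mult_minus_left)

lemma sum_cos_inner_le:
  assumes "m \<ge> 1"
  shows "(\<Sum>X\<in>PiE {..<n} (\<lambda>_. grid m). cos (2 * pi * real m * \<sigma> * (\<Sum>i<n. X i * x i)))
    \<le> real (card (PiE {..<n} (\<lambda>_. grid m))) * char_abs_prod m n x \<sigma>"
proof -
  have "(\<Prod>i<n. char_unif m (\<sigma> * x i)) \<le> char_abs_prod m n x \<sigma>"
    unfolding char_abs_prod_def by (simp add: abs_prod[symmetric])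
  moreover have "real (card (PiE {..<n} (\<lambda>_. grid m))) = (2 * real m + 1) ^ n"
    using assms by (simp add: card_grid_PiE add.commute)
  ultimately show ?thesis
    unfolding sum_cos_inner_eq[OF assms] by (simp add: mult_left_mono)
qed

section \<open>Small frequencies\<close>

lemma on_sphere_sum_sq: "on_sphere n x \<Longrightarrow> (\<Sum>i<n. (x i)\<^sup>2) = 1"
  unfolding on_sphere_def vnorm_def by (metis real_sqrt_eq_1_iff)

lemma incompressible_sum_sq_outside_gt:
  assumes "incompressible n \<alpha> \<gamma> x" "0 < \<gamma>" "J \<subseteq> {..<n}" "real (card J) \<le> \<alpha> * real n"
  shows "\<gamma>\<^sup>2 < (\<Sum>i\<in>{..<n} - J. (x i)\<^sup>2)"
proof -
  define u where "u = (\<lambda>i. if i \<in> J then x i else 0)"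
  define v where "v = (\<lambda>i. if i \<in> J then 0 else x i)"
  have "{i. i < n \<and> u i \<noteq> 0} \<subseteq> J"
    unfolding u_def by auto
  then have "card {i. i < n \<and> u i \<noteq> 0} \<le> card J"
    using assms by (intro card_mono) (auto intro: finite_subset)
  then have "real (supp_card n u) \<le> \<alpha> * real n"
    using assms unfolding supp_card_def by linarith
  moreover have "\<forall>i<n. x i = u i + v i"
    unfolding u_def v_def by auto
  ultimately have "\<not> vnorm n v \<le> \<gamma>"
    using assms(1) unfolding incompressible_def compressible_def by blast
  then have "\<gamma> < vnorm n v"
    by simp
  also have "vnorm n v = sqrt (\<Sum>i\<in>{..<n} - J. (x i)\<^sup>2)"
    unfolding vnorm_def by (rule arg_cong[of _ _ sqrt], rule sum.mono_neutral_cong_right) (auto simp: v_def)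
  finally have "\<gamma>\<^sup>2 < (sqrt (\<Sum>i\<in>{..<n} - J. (x i)\<^sup>2))\<^sup>2"
    using assms(2) by (intro power_strict_mono) auto
  then show ?thesis
    by (simp add: sum_nonneg)
qed

lemma incompressible_two_heavy_groups:
  assumes "incompressible n \<alpha> \<gamma> x" "0 < \<gamma>" "2 \<le> \<alpha> * real n"
    and "J \<subseteq> {..<n}" "real (card J) \<le> \<alpha> * real n / 2"
  obtains B1 B2 where "B1 \<subseteq> {..<n} - J" "B2 \<subseteq> {..<n} - J" "B1 \<inter> B2 = {}"
    "\<gamma>\<^sup>2 / 3 \<le> (\<Sum>i\<in>B1. (x i)\<^sup>2)" "\<gamma>\<^sup>2 / 3 \<le> (\<Sum>i\<in>B2. (x i)\<^sup>2)"
proof -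
  have "finite J"
    using assms(4) finite_subset by blast
  have heavy: "3 * (\<gamma>\<^sup>2 / 3) < (\<Sum>i\<in>{..<n} - J. (x i)\<^sup>2)"
    using incompressible_sum_sq_outside_gt[OF assms(1,2,4)] assms(3,5) by simp
  have remove_one: "\<gamma>\<^sup>2 / 3 \<le> (\<Sum>i\<in>{..<n} - J - {j}. (x i)\<^sup>2)" if j: "j \<in> {..<n} - J" for j
  proof -
    have "real (card (insert j J)) \<le> \<alpha> * real n"
      using \<open>finite J\<close> assms(3,5) by (simp add: card_insert_if)
    then have "\<gamma>\<^sup>2 < (\<Sum>i\<in>{..<n} - insert j J. (x i)\<^sup>2)"
      using incompressible_sum_sq_outside_gt[OF assms(1,2), of "insert j J"] assms(4) j by auto
    moreover have "{..<n} - insert j J = {..<n} - J - {j}"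
      by auto
    ultimately have "\<gamma>\<^sup>2 < (\<Sum>i\<in>{..<n} - J - {j}. (x i)\<^sup>2)"
      by simp
    then show ?thesis
      using zero_le_power2[of \<gamma>] by linarith
  qed
  show ?thesis
  proof (rule exists_two_disjoint_heavy_subsets)
    show "finite ({..<n} - J)" "\<And>i. 0 \<le> (x i)\<^sup>2" "0 < \<gamma>\<^sup>2 / 3"
      using assms(2) by simp_all
    show "3 * (\<gamma>\<^sup>2 / 3) < (\<Sum>i\<in>{..<n} - J. (x i)\<^sup>2)"
      by (fact heavy)
    show "\<gamma>\<^sup>2 / 3 \<le> (\<Sum>i\<in>{..<n} - J - {j}. (x i)\<^sup>2)" if "j \<in> {..<n} - J" for j
      using that by (rule remove_one)
  qed (fact that)
qed

lemma prod_char_unif_sq_le: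
  assumes "m \<ge> 1" "finite B" "\<And>i. i \<in> B \<Longrightarrow> \<bar>\<tau> * x i\<bar> \<le> 1 / 2"
    and "0 \<le> b" "b \<le> (\<Sum>i\<in>B. (x i)\<^sup>2)"
  shows "(\<Prod>i\<in>B. (char_unif m (\<tau> * x i))\<^sup>2) \<le> 1 / (1 + (real m * \<tau>)\<^sup>2 * b)"
proof -
  have "(\<Prod>i\<in>B. (char_unif m (\<tau> * x i))\<^sup>2) \<le> (\<Prod>i\<in>B. 1 / (1 + (real m * (\<tau> * x i))\<^sup>2))"
    using assms by (intro prod_mono conjI char_unif_sq_le) auto
  also have "\<dots> = 1 / (\<Prod>i\<in>B. 1 + (real m * (\<tau> * x i))\<^sup>2)"
    by (simp add: prod_dividef)
  also have "\<dots> \<le> 1 / (1 + (real m * \<tau>)\<^sup>2 * b)"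
  proof (rule frac_le)
    have "(real m * \<tau>)\<^sup>2 * b \<le> (real m * \<tau>)\<^sup>2 * (\<Sum>i\<in>B. (x i)\<^sup>2)"
      using assms(5) by (rule mult_left_mono) simp
    also have "\<dots> = (\<Sum>i\<in>B. (real m * (\<tau> * x i))\<^sup>2)"
      by (simp add: power_mult_distrib sum_distrib_left mult.assoc)
    finally have "1 + (real m * \<tau>)\<^sup>2 * b \<le> 1 + (\<Sum>i\<in>B. (real m * (\<tau> * x i))\<^sup>2)"
      by simp
    also have "\<dots> \<le> (\<Prod>i\<in>B. 1 + (real m * (\<tau> * x i))\<^sup>2)"
      using assms(2) by (rule one_plus_sum_le_prod) simp
    finally show "1 + (real m * \<tau>)\<^sup>2 * b \<le> (\<Prod>i\<in>B. 1 + (real m * (\<tau> * x i))\<^sup>2)" .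
    show "0 < 1 + (real m * \<tau>)\<^sup>2 * b"
      using assms(4) by (simp add: add_pos_nonneg)
  qed simp_all
  finally show ?thesis .
qed

lemma card_large_scaled_coords_le:
  assumes "on_sphere n x" "0 < \<alpha>" "\<alpha> < 1 / 2" "0 \<le> \<tau>" "\<tau> \<le> \<alpha> * sqrt (real n) / 2"
  shows "real (card {i\<in>{..<n}. 1 / 2 < \<bar>\<tau> * x i\<bar>}) \<le> \<alpha> * real n / 2"
proof -
  have "real (card {i\<in>{..<n}. 1 / 2 < \<bar>\<tau> * x i\<bar>}) \<le> 4 * (\<Sum>i<n. (\<tau> * x i)\<^sup>2)"
    by (rule card_large_terms_le) simp
  also have "\<dots> = 4 * \<tau>\<^sup>2"
    using on_sphere_sum_sq[OF assms(1)] by (simp add: power_mult_distrib sum_distrib_left[symmetric])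
  also have "\<dots> \<le> 4 * (\<alpha> * sqrt (real n) / 2)\<^sup>2"
    using assms(4,5) by (intro mult_left_mono power_mono) auto
  also have "\<dots> = \<alpha>\<^sup>2 * real n"
    by (simp add: power_mult_distrib power_divide)
  also have "\<dots> = \<alpha> * (\<alpha> * real n)"
    by (simp only: power2_eq_square mult.assoc)
  also have "\<dots> \<le> 1 / 2 * (\<alpha> * real n)"
    using assms(2,3) by (intro mult_right_mono) auto
  finally show ?thesis
    by simp
qed

text \<open>Two disjoint groups of coordinates each carrying mass \<open>\<gamma>\<^sup>2 / 3\<close> make the
  characteristic function decay quadratically for \<open>\<tau> \<le> \<alpha> \<surd>n / 2\<close>.\<close>
lemma char_abs_prod_le_small:
  assumes "m \<ge> 1" "0 < \<alpha>" "\<alpha> < 1 / 2" "2 \<le> \<alpha> * real n" "0 < \<gamma>" "incompressible n \<alpha> \<gamma> x"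
    and "0 \<le> \<tau>" "\<tau> \<le> \<alpha> * sqrt (real n) / 2"
  shows "char_abs_prod m n x \<tau> \<le> 1 / (1 + (real m * \<tau> * \<gamma>)\<^sup>2 / 3)"
proof -
  define J where "J = {i\<in>{..<n}. 1 / 2 < \<bar>\<tau> * x i\<bar>}"
  define Q where "Q = (real m * \<tau>)\<^sup>2 * (\<gamma>\<^sup>2 / 3)"
  have "J \<subseteq> {..<n}"
    unfolding J_def by auto
  moreover have "real (card J) \<le> \<alpha> * real n / 2"
    unfolding J_def using assms(6) by (intro card_large_scaled_coords_le assms(2,3,7,8)) (simp add: incompressible_def)
  ultimately obtain B1 B2 where B: "B1 \<subseteq> {..<n} - J" "B2 \<subseteq> {..<n} - J" "B1 \<inter> B2 = {}"
    "\<gamma>\<^sup>2 / 3 \<le> (\<Sum>i\<in>B1. (x i)\<^sup>2)" "\<gamma>\<^sup>2 / 3 \<le> (\<Sum>i\<in>B2. (x i)\<^sup>2)"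
    using incompressible_two_heavy_groups[OF assms(6,5,4)] by metis
  have group: "(\<Prod>i\<in>B. (char_unif m (\<tau> * x i))\<^sup>2) \<le> 1 / (1 + Q)"
    if "B \<subseteq> {..<n} - J" "\<gamma>\<^sup>2 / 3 \<le> (\<Sum>i\<in>B. (x i)\<^sup>2)" for B
    unfolding Q_def using that
    by (intro prod_char_unif_sq_le[OF assms(1)]) (auto simp: J_def intro: finite_subset)
  have "(char_abs_prod m n x \<tau>)\<^sup>2 = (\<Prod>i<n. (char_unif m (\<tau> * x i))\<^sup>2)"
    unfolding char_abs_prod_def by (simp add: prod_power_distrib)
  also have "\<dots> \<le> (\<Prod>i\<in>B1 \<union> B2. (char_unif m (\<tau> * x i))\<^sup>2)"
    using B(1,2) abs_char_unif_le_1
    by (intro prod_le_prod_subset) (auto simp: abs_square_le_1)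
  also have "\<dots> = (\<Prod>i\<in>B1. (char_unif m (\<tau> * x i))\<^sup>2) * (\<Prod>i\<in>B2. (char_unif m (\<tau> * x i))\<^sup>2)"
    using B by (intro prod.union_disjoint) (auto intro: finite_subset)
  also have "\<dots> \<le> 1 / (1 + Q) * (1 / (1 + Q))"
    using group[OF B(1,4)] group[OF B(2,5)]
    by (intro mult_mono) (auto simp: Q_def intro: prod_nonneg)
  finally have "(char_abs_prod m n x \<tau>)\<^sup>2 \<le> (1 / (1 + Q))\<^sup>2"
    by (simp only: power2_eq_square)
  then have "char_abs_prod m n x \<tau> \<le> 1 / (1 + Q)"
    unfolding Q_def by (rule power2_le_imp_le) (simp add: add_pos_nonneg)
  also have "Q = (real m * \<tau> * \<gamma>)\<^sup>2 / 3"
    unfolding Q_def by (simp add: power_mult_distrib)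
  finally show ?thesis .
qed

section \<open>Frequencies below the LCD\<close>

lemma LCD_nonneg: "0 \<le> LCD n \<alpha> \<beta> x"
  unfolding LCD_def by (rule Inf_greatest) auto

lemma LCD_le:
  assumes "0 < D" "\<forall>i<n. frac_part (D * x i) = u i + v i" "real (supp_card n u) \<le> \<alpha> * real n"
    and "vnorm n v \<le> \<beta> * min D (sqrt (real n))"
  shows "LCD n \<alpha> \<beta> x \<le> ereal D"
  unfolding LCD_def
proof (rule Inf_lower, rule imageI, rule CollectI)
  show "0 < D \<and> (\<exists>u v. (\<forall>i<n. frac_part (D * x i) = u i + v i) \<and> real (supp_card n u) \<le> \<alpha> * real n
      \<and> vnorm n v \<le> \<beta> * min D (sqrt (real n)))"
    using assms by (intro conjI exI[where x = u] exI[where x = v]) auto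
qed

lemma less_LCD_of_scale_bound:
  assumes "m \<ge> 1" "1 / (ereal (2 * pi * real m) * LCD n \<alpha> \<beta> x) \<le> ereal \<epsilon>"
    and "0 < \<tau>" "\<tau> \<le> T" "2 * pi * real m * T * \<epsilon> < 1"
  shows "ereal \<tau> < LCD n \<alpha> \<beta> x"
proof (rule ereal_less_of_inverse_mult_le[OF _ LCD_nonneg assms(2,3)])
  show "0 < 2 * pi * real m"
    using assms(1) by simp
  then have "0 \<le> \<epsilon>"
    using nonneg_of_inverse_mult_le[OF _ LCD_nonneg assms(2)] by simp
  with assms(4) \<open>0 < 2 * pi * real m\<close> have "2 * pi * real m * \<tau> * \<epsilon> \<le> 2 * pi * real m * T * \<epsilon>"
    by (intro mult_right_mono mult_left_mono) auto
  with assms(5) show "2 * pi * real m * \<tau> * \<epsilon> < 1"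
    by linarith
qed

lemma lattice_freq_less_LCD:
  assumes "m \<ge> 1" "1 / (ereal (2 * pi * real m) * LCD n \<alpha> \<beta> x) \<le> ereal \<epsilon>"
    and "j < N" "l < N" "2 * pi * real m * ((real N - 1) * \<sigma>) * \<epsilon> < 1" "0 < \<sigma>"
  shows "j = l \<or> ereal (\<bar>real j - real l\<bar> * \<sigma>) < LCD n \<alpha> \<beta> x"
proof (cases "j = l")
  case False
  have pos: "0 < \<bar>real j - real l\<bar> * \<sigma>"
    using False assms(6) by simp
  have le: "\<bar>real j - real l\<bar> * \<sigma> \<le> (real N - 1) * \<sigma>"
    using assms(3,4,6) by (intro mult_right_mono) auto
  show ?thesis
    by (rule disjI2[OF less_LCD_of_scale_bound[OF assms(1,2) pos le assms(5)]])
qed simp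

text \<open>Otherwise the small fractional parts and the at most \<open>\<alpha> n\<close> large ones would witness
  \<open>LCD \<le> \<tau>\<close>.\<close>
lemma card_large_frac_part_gt:
  assumes "n \<ge> 1" "0 < \<tau>" "0 \<le> \<beta>" "ereal \<tau> < LCD n \<alpha> \<beta> x"
  shows "\<alpha> * real n
    < real (card {i\<in>{..<n}. \<beta> * min \<tau> (sqrt (real n)) / sqrt (real n) \<le> \<bar>frac_part (\<tau> * x i)\<bar>})"
    (is "_ < real (card ?J)")
proof (rule ccontr)
  assume "\<not> ?thesis"
  define s where "s = \<beta> * min \<tau> (sqrt (real n)) / sqrt (real n)"
  define u where "u = (\<lambda>i. if i \<in> ?J then frac_part (\<tau> * x i) else 0)"
  define v where "v = (\<lambda>i. if i \<in> ?J then 0 else frac_part (\<tau> * x i))"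
  have "0 \<le> s"
    using assms unfolding s_def by simp
  have "{i. i < n \<and> u i \<noteq> 0} \<subseteq> ?J"
    unfolding u_def by auto
  then have "card {i. i < n \<and> u i \<noteq> 0} \<le> card ?J"
    by (intro card_mono) auto
  with \<open>\<not> ?thesis\<close> have supp_u: "real (supp_card n u) \<le> \<alpha> * real n"
    unfolding supp_card_def by linarith
  have v_small: "(v i)\<^sup>2 \<le> s\<^sup>2" if "i < n" for i
  proof (cases "i \<in> ?J")
    case True
    then show ?thesis
      unfolding v_def by simp
  next
    case False
    then have "\<bar>v i\<bar> \<le> s"
      using that unfolding v_def s_def by auto
    then have "\<bar>v i\<bar>\<^sup>2 \<le> s\<^sup>2"
      by (intro power_mono) auto
    then show ?thesis
      by simp
  qed
  have "vnorm n v \<le> sqrt (real n * s\<^sup>2)"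
    unfolding vnorm_def using v_small sum_mono[of "{..<n}" "\<lambda>i. (v i)\<^sup>2" "\<lambda>_. s\<^sup>2"] by simp
  also have "\<dots> = \<beta> * min \<tau> (sqrt (real n))"
    using assms \<open>0 \<le> s\<close> unfolding s_def by (simp add: real_sqrt_mult)
  finally have v_norm: "vnorm n v \<le> \<beta> * min \<tau> (sqrt (real n))" .
  have "\<forall>i<n. frac_part (\<tau> * x i) = u i + v i"
    unfolding u_def v_def by auto
  then have "LCD n \<alpha> \<beta> x \<le> ereal \<tau>"
    using LCD_le[OF assms(2) _ supp_u v_norm] by simp
  with assms(4) show False
    by simp
qed

lemma char_abs_prod_le_below_LCD:
  assumes "m \<ge> 1" "n \<ge> 1" "0 < \<alpha>" "\<alpha> \<le> 2" "0 < \<beta>"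
    and "\<alpha> * sqrt (real n) / 2 \<le> \<tau>" "ereal \<tau> < LCD n \<alpha> \<beta> x"
  shows "char_abs_prod m n x \<tau> \<le> 1 / (\<alpha> * \<beta> * real m) powr (\<alpha> * real n)"
proof -
  define s where "s = \<beta> * min \<tau> (sqrt (real n)) / sqrt (real n)"
  define J where "J = {i\<in>{..<n}. s \<le> \<bar>frac_part (\<tau> * x i)\<bar>}"
  define c where "c = 2 / (7 * real m * s)"
  have sqrt_pos: "0 < sqrt (real n)"
    using assms by simp
  moreover have "0 < \<alpha> * sqrt (real n) / 2"
    using assms sqrt_pos by simp
  ultimately have "0 < \<tau>"
    using assms by linarith
  have "\<alpha> * sqrt (real n) / 2 \<le> min \<tau> (sqrt (real n))"
    using assms sqrt_pos by auto
  then have "\<beta> * (\<alpha> * sqrt (real n) / 2) / sqrt (real n) \<le> s"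
    unfolding s_def using assms sqrt_pos by (intro divide_right_mono mult_left_mono) auto
  then have s_ge: "\<alpha> * \<beta> / 2 \<le> s"
    using sqrt_pos by (simp add: mult.commute)
  moreover have "0 < \<alpha> * \<beta> / 2"
    using assms by simp
  ultimately have "0 < s"
    by linarith
  have "char_abs_prod m n x \<tau> \<le> (\<Prod>i\<in>J. \<bar>char_unif m (\<tau> * x i)\<bar>)"
    unfolding char_abs_prod_def J_def by (intro prod_le_prod_subset) (auto simp: abs_char_unif_le_1)
  also have "\<dots> \<le> (\<Prod>i\<in>J. c)"
    unfolding c_def J_def using assms(1) \<open>0 < s\<close>
    by (intro prod_mono conjI abs_char_unif_le_of_frac_part) auto
  finally have "char_abs_prod m n x \<tau> \<le> min 1 (c ^ card J)"
    using char_abs_prod_le_1 by simp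
  also have "\<dots> \<le> 1 / (\<alpha> * \<beta> * real m) powr (\<alpha> * real n)"
  proof (rule min_one_power_le_inverse_powr)
    have "c * (\<alpha> * \<beta> * real m) \<le> c * (2 * s * real m)"
      unfolding c_def using s_ge \<open>0 < s\<close> assms(1) by (intro mult_left_mono) auto
    also have "\<dots> = 4 / 7"
      unfolding c_def using \<open>0 < s\<close> assms(1) by simp
    finally show "c * (\<alpha> * \<beta> * real m) \<le> 1"
      by simp
    show "\<alpha> * real n \<le> real (card J)"
      unfolding J_def s_def using card_large_frac_part_gt[OF assms(2) \<open>0 < \<tau>\<close> _ assms(7)] assms(5)
      by simp
  qed (use assms \<open>0 < s\<close> in \<open>simp_all add: c_def\<close>)
  finally show ?thesis .
qed

text \<open>At the frequency step \<open>2 / (m \<gamma>)\<close> the small-frequency bound becomes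
  \<open>1 / (1 + 4 k\<^sup>2 / 3)\<close>.\<close>
lemma char_abs_prod_le_lattice:
  assumes "m \<ge> 1" "n \<ge> 1" "0 < \<alpha>" "\<alpha> < 1 / 2" "2 \<le> \<alpha> * real n" "0 < \<beta>" "0 < \<gamma>"
    and "incompressible n \<alpha> \<gamma> x"
    and "k = 0 \<or> ereal (\<bar>k\<bar> * (2 / (real m * \<gamma>))) < LCD n \<alpha> \<beta> x"
  shows "char_abs_prod m n x (k * (2 / (real m * \<gamma>)))
    \<le> 1 / (1 + k\<^sup>2) + 1 / (\<alpha> * \<beta> * real m) powr (\<alpha> * real n)"
proof -
  define \<tau> where "\<tau> = \<bar>k\<bar> * (2 / (real m * \<gamma>))"
  have "0 \<le> \<tau>"
    unfolding \<tau>_def using assms by simp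
  have eq: "char_abs_prod m n x (k * (2 / (real m * \<gamma>))) = char_abs_prod m n x \<tau>"
  proof (cases "0 \<le> k")
    case False
    then have "k * (2 / (real m * \<gamma>)) = - \<tau>"
      unfolding \<tau>_def by simp
    then show ?thesis
      by (simp add: char_abs_prod_minus)
  qed (simp add: \<tau>_def)
  have small: "char_abs_prod m n x \<tau> \<le> 1 / (1 + k\<^sup>2)" if "\<tau> \<le> \<alpha> * sqrt (real n) / 2"
  proof -
    have "real m * \<tau> * \<gamma> = 2 * \<bar>k\<bar>"
      unfolding \<tau>_def using assms by simp
    then have "char_abs_prod m n x \<tau> \<le> 1 / (1 + 4 * k\<^sup>2 / 3)"
      using char_abs_prod_le_small[OF assms(1,3,4,5,7,8) \<open>0 \<le> \<tau>\<close> that] by (simp add: power_mult_distrib)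
    also have "\<dots> \<le> 1 / (1 + k\<^sup>2)"
      by (rule frac_le) (simp_all add: add_pos_nonneg)
    finally show ?thesis .
  qed
  have large: "char_abs_prod m n x \<tau> \<le> 1 / (\<alpha> * \<beta> * real m) powr (\<alpha> * real n)"
    if "\<alpha> * sqrt (real n) / 2 \<le> \<tau>"
  proof (rule char_abs_prod_le_below_LCD[OF assms(1,2,3) _ assms(6) that])
    have "0 < \<alpha> * sqrt (real n) / 2"
      using assms by simp
    then have "k \<noteq> 0"
      using that unfolding \<tau>_def by auto
    then show "ereal \<tau> < LCD n \<alpha> \<beta> x"
      using assms(9) unfolding \<tau>_def by simp
  qed (use assms in simp)
  have "0 \<le> 1 / (1 + k\<^sup>2)" "0 \<le> 1 / (\<alpha> * \<beta> * real m) powr (\<alpha> * real n)"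
    by (simp_all add: add_pos_nonneg)
  moreover have "\<tau> \<le> \<alpha> * sqrt (real n) / 2 \<or> \<alpha> * sqrt (real n) / 2 \<le> \<tau>"
    by linarith
  ultimately show ?thesis
    unfolding eq using small large by linarith
qed

section \<open>Esseen's inequality\<close>

lemma fejer_square_identity:
  fixes y :: real
  shows "(\<Sum>j<N. cos (real j * y))\<^sup>2 + (\<Sum>j<N. sin (real j * y))\<^sup>2
    = (\<Sum>j<N. \<Sum>l<N. cos ((real j - real l) * y))"
proof -
  have "(\<Sum>j<N. cos (real j * y))\<^sup>2 + (\<Sum>j<N. sin (real j * y))\<^sup>2
      = (\<Sum>j<N. \<Sum>l<N. cos (real j * y) * cos (real l * y) + sin (real j * y) * sin (real l * y))"
    by (simp add: power2_eq_square sum_product sum.distrib)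
  also have "\<dots> = (\<Sum>j<N. \<Sum>l<N. cos ((real j - real l) * y))"
    by (simp add: cos_diff left_diff_distrib)
  finally show ?thesis .
qed

lemma fejer_sum_nonneg: "0 \<le> (\<Sum>j<N. \<Sum>l<N. cos ((real j - real l) * y))"
  by (simp add: fejer_square_identity[symmetric])

lemma fejer_sum_ge:
  assumes "\<bar>y\<bar> * (real N - 1) \<le> 1"
  shows "real N ^ 2 / 4 \<le> (\<Sum>j<N. \<Sum>l<N. cos ((real j - real l) * y))"
proof -
  have "(\<Sum>j<N. (1::real) / 2) \<le> (\<Sum>j<N. cos (real j * y))"
  proof (intro sum_mono cos_ge_half)
    fix j assume "j \<in> {..<N}"
    then have "\<bar>y\<bar> * real j \<le> \<bar>y\<bar> * (real N - 1)"
      by (intro mult_left_mono) auto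
    then show "\<bar>real j * y\<bar> \<le> 1"
      using assms by (simp add: abs_mult mult.commute)
  qed
  then have "(real N / 2)\<^sup>2 \<le> (\<Sum>j<N. cos (real j * y))\<^sup>2"
    by (intro power_mono) auto
  also have "\<dots> \<le> (\<Sum>j<N. cos (real j * y))\<^sup>2 + (\<Sum>j<N. sin (real j * y))\<^sup>2"
    by simp
  finally show ?thesis
    by (simp add: fejer_square_identity power_divide)
qed

lemma card_le_fejer_sum:
  assumes "finite A" "\<And>X. X \<in> A \<inter> E \<Longrightarrow> \<bar>y X\<bar> * (real N - 1) \<le> 1"
  shows "real (card (A \<inter> E)) * (real N ^ 2 / 4) \<le> (\<Sum>X\<in>A. \<Sum>j<N. \<Sum>l<N. cos ((real j - real l) * y X))"
proof -
  have "real (card (A \<inter> E)) * (real N ^ 2 / 4) = (\<Sum>X\<in>A \<inter> E. real N ^ 2 / 4)"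
    by simp
  also have "\<dots> \<le> (\<Sum>X\<in>A \<inter> E. \<Sum>j<N. \<Sum>l<N. cos ((real j - real l) * y X))"
    using assms(2) by (intro sum_mono fejer_sum_ge)
  also have "\<dots> \<le> (\<Sum>X\<in>A. \<Sum>j<N. \<Sum>l<N. cos ((real j - real l) * y X))"
    using assms(1) by (intro sum_mono2) (auto simp: fejer_sum_nonneg)
  finally show ?thesis .
qed

lemma prob_small_ball_le_fejer:
  assumes "m \<ge> 1" "N \<ge> 1" "0 \<le> \<sigma>" "(real N - 1) * (2 * pi * real m * \<sigma>) * \<epsilon> \<le> 1"
  shows "measure_pmf.prob (Dn m n) {X. \<bar>\<Sum>i<n. X i * x i\<bar> \<le> \<epsilon>}
    \<le> 4 / real N ^ 2 * (\<Sum>j<N. \<Sum>l<N. char_abs_prod m n x ((real j - real l) * \<sigma>))"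
proof -
  let ?A = "PiE {..<n} (\<lambda>_. grid m)"
  let ?E = "{X. \<bar>\<Sum>i<n. X i * x i\<bar> \<le> \<epsilon>}"
  let ?S = "\<lambda>X. \<Sum>i<n. X i * x i"
  have "real (card (?A \<inter> ?E)) * (real N ^ 2 / 4)
      \<le> (\<Sum>X\<in>?A. \<Sum>j<N. \<Sum>l<N. cos ((real j - real l) * (2 * pi * real m * \<sigma> * ?S X)))"
  proof (rule card_le_fejer_sum)
    fix X assume "X \<in> ?A \<inter> ?E"
    then have "\<bar>2 * pi * real m * \<sigma> * ?S X\<bar> \<le> 2 * pi * real m * \<sigma> * \<epsilon>"
      using assms(3) by (simp add: abs_mult mult_left_mono)
    from mult_right_mono[OF this, of "real N - 1"] assms(2,4)
    show "\<bar>2 * pi * real m * \<sigma> * ?S X\<bar> * (real N - 1) \<le> 1"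
      by (simp add: mult_ac)
  qed (simp add: finite_PiE finite_grid)
  also have "\<dots> = (\<Sum>X\<in>?A. \<Sum>j<N. \<Sum>l<N. cos (2 * pi * real m * ((real j - real l) * \<sigma>) * ?S X))"
    by (simp only: mult_ac)
  also have "\<dots> = (\<Sum>j<N. \<Sum>X\<in>?A. \<Sum>l<N. cos (2 * pi * real m * ((real j - real l) * \<sigma>) * ?S X))"
    by (rule sum.swap)
  also have "\<dots> = (\<Sum>j<N. \<Sum>l<N. \<Sum>X\<in>?A. cos (2 * pi * real m * ((real j - real l) * \<sigma>) * ?S X))"
    by (intro sum.cong refl sum.swap)
  also have "\<dots> \<le> (\<Sum>j<N. \<Sum>l<N. real (card ?A) * char_abs_prod m n x ((real j - real l) * \<sigma>))"
    using assms(1) by (intro sum_mono sum_cos_inner_le)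
  finally have "real (card (?A \<inter> ?E)) * (real N ^ 2 / 4)
      \<le> real (card ?A) * (\<Sum>j<N. \<Sum>l<N. char_abs_prod m n x ((real j - real l) * \<sigma>))"
    by (simp add: sum_distrib_left)
  moreover have "0 < real (card ?A)"
    using assms(1) by (simp add: card_grid_PiE)
  ultimately show ?thesis
    unfolding prob_Dn using assms(2) by (simp add: field_simps)
qed

lemma prob_small_ball_le_N:
  assumes "m \<ge> 1" "n \<ge> 1" "0 < \<alpha>" "\<alpha> < 1 / 2" "2 \<le> \<alpha> * real n" "0 < \<beta>" "0 < \<gamma>"
    and "incompressible n \<alpha> \<gamma> x" "1 / (ereal (2 * pi * real m) * LCD n \<alpha> \<beta> x) \<le> ereal \<epsilon>"
    and "N \<ge> 1" "(real N - 1) * (4 * pi * \<epsilon> / \<gamma>) \<le> 1 / 2"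
  shows "measure_pmf.prob (Dn m n) {X. \<bar>\<Sum>i<n. X i * x i\<bar> \<le> \<epsilon>}
    \<le> 20 / real N + 4 * (1 / (\<alpha> * \<beta> * real m) powr (\<alpha> * real n))"
proof -
  define \<sigma> where "\<sigma> = 2 / (real m * \<gamma>)"
  define Q where "Q = 1 / (\<alpha> * \<beta> * real m) powr (\<alpha> * real n)"
  have "0 < \<sigma>"
    unfolding \<sigma>_def using assms by simp
  have scale: "2 * pi * real m * ((real N - 1) * \<sigma>) * \<epsilon> \<le> 1 / 2"
    unfolding \<sigma>_def using assms(1,7,11) by (simp add: mult_ac)
  have "measure_pmf.prob (Dn m n) {X. \<bar>\<Sum>i<n. X i * x i\<bar> \<le> \<epsilon>}
      \<le> 4 / real N ^ 2 * (\<Sum>j<N. \<Sum>l<N. char_abs_prod m n x ((real j - real l) * \<sigma>))"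
  proof (rule prob_small_ball_le_fejer[OF assms(1,10)])
    have "(real N - 1) * (2 * pi * real m * \<sigma>) * \<epsilon> = 2 * pi * real m * ((real N - 1) * \<sigma>) * \<epsilon>"
      by (simp only: mult_ac)
    with scale show "(real N - 1) * (2 * pi * real m * \<sigma>) * \<epsilon> \<le> 1"
      by linarith
  qed (use \<open>0 < \<sigma>\<close> in simp)
  also have "\<dots> \<le> 4 / real N ^ 2 * (5 * real N + real N ^ 2 * Q)"
  proof (intro mult_left_mono double_sum_le)
    fix j l assume "j < N" "l < N"
    moreover have "2 * pi * real m * ((real N - 1) * \<sigma>) * \<epsilon> < 1"
      using scale by linarith
    ultimately have "j = l \<or> ereal (\<bar>real j - real l\<bar> * \<sigma>) < LCD n \<alpha> \<beta> x"
      using \<open>0 < \<sigma>\<close> by (rule lattice_freq_less_LCD[OF assms(1,9)])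
    then show "char_abs_prod m n x ((real j - real l) * \<sigma>) \<le> 1 / (1 + (real j - real l)\<^sup>2) + Q"
      unfolding \<sigma>_def Q_def by (intro char_abs_prod_le_lattice[OF assms(1-8)]) auto
  qed simp
  also have "\<dots> = 20 / real N + 4 * Q"
    using assms(10) by (simp add: field_simps power2_eq_square)
  finally show ?thesis
    unfolding Q_def .
qed

theorem lemma5p3:
  shows "\<exists>c>0. \<forall>(n::nat) (m::nat) (\<alpha>::real) (\<beta>::real) (\<gamma>::real) (x::nat \<Rightarrow> real) (\<epsilon>::real).
     n \<ge> 1 \<longrightarrow> m \<ge> 1 \<longrightarrow>
     0 < \<alpha> \<longrightarrow> \<alpha> < 1/2 \<longrightarrow> 0 < \<beta> \<longrightarrow> \<beta> < 1/2 \<longrightarrow> 0 < \<gamma> \<longrightarrow> \<gamma> < 1/2 \<longrightarrow>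
     \<alpha> * real n \<ge> 2 \<longrightarrow>
     incompressible n \<alpha> \<gamma> x \<longrightarrow>
     ereal \<epsilon> \<ge> 1 / (ereal (2 * pi * real m) * LCD n \<alpha> \<beta> x) \<longrightarrow>
     measure_pmf.prob (Dn m n) {X. \<bar>\<Sum>i<n. X i * x i\<bar> \<le> \<epsilon>}
       \<le> c * (\<epsilon> / \<gamma> + 1 / ((\<alpha> * \<beta> * real m) powr (\<alpha> * real n)))"
proof (intro exI[of _ 600] conjI allI impI)
  fix n m :: nat and \<alpha> \<beta> \<gamma> \<epsilon> :: real and x :: "nat \<Rightarrow> real"
  assume n: "n \<ge> 1" and m: "m \<ge> 1" and \<alpha>: "0 < \<alpha>" "\<alpha> < 1/2" and \<beta>: "0 < \<beta>" "\<beta> < 1/2"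
    and \<gamma>: "0 < \<gamma>" "\<gamma> < 1/2" and \<alpha>n: "\<alpha> * real n \<ge> 2" and x: "incompressible n \<alpha> \<gamma> x"
    and \<epsilon>: "ereal \<epsilon> \<ge> 1 / (ereal (2 * pi * real m) * LCD n \<alpha> \<beta> x)"
  let ?P = "measure_pmf.prob (Dn m n) {X. \<bar>\<Sum>i<n. X i * x i\<bar> \<le> \<epsilon>}"
  define Q where "Q = 1 / (\<alpha> * \<beta> * real m) powr (\<alpha> * real n)"
  have "0 \<le> \<epsilon>"
    using nonneg_of_inverse_mult_le[OF _ LCD_nonneg \<epsilon>] m by simp
  have "?P \<le> 2 * 20 * (4 * pi * \<epsilon> / \<gamma>) + 4 * Q"
  proof (rule le_of_forall_scale_le)
    show "0 \<le> 4 * pi * \<epsilon> / \<gamma>"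
      using \<open>0 \<le> \<epsilon>\<close> \<gamma> by simp
    fix N :: nat assume "N \<ge> 1" "(real N - 1) * (4 * pi * \<epsilon> / \<gamma>) \<le> 1 / 2"
    then show "?P \<le> 20 / real N + 4 * Q"
      unfolding Q_def by (rule prob_small_ball_le_N[OF m n \<alpha> \<alpha>n \<beta>(1) \<gamma>(1) x \<epsilon>])
  qed simp
  also have "\<dots> \<le> 600 * (\<epsilon> / \<gamma>) + 600 * Q"
  proof -
    have "160 * pi * (\<epsilon> / \<gamma>) \<le> 600 * (\<epsilon> / \<gamma>)"
      using pi_approx \<open>0 \<le> \<epsilon>\<close> \<gamma> by (intro mult_right_mono) auto
    moreover have "0 \<le> Q"
      unfolding Q_def by simp
    ultimately show ?thesis
      by simp
  qed
  finally show "?P \<le> 600 * (\<epsilon> / \<gamma> + Q)"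
    by (simp add: distrib_left)
qed simp

end
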